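(* Let Assumption 1 hold, let $\{\mathbf x_k\}$ be generated by Algorithm MADS-PIP, let $\bar{\mathbf x}$ be an end-path point and let $\bar{\mathbf d}$ be a path-refining direction for $\bar{\mathbf x}$. If $f$, $c^{int}$ and $c^{ext}$ are Lipschitz continuous near $\bar{\mathbf x}$, then $(c^{ext})^\circ(\bar{\mathbf x};\bar{\mathbf d})\ge0$.
   Context: Consider the problem of minimizing $f(\mathbf x)$ over $\mathbf x\in\mathbb R^n$ subject to $g_\ell(\mathbf x)\le 0$ ($\ell=1,\dots,m$) and $h_j(\mathbf x)=0$ ($j=1,\dots,p$), where $f,g_\ell,h_j:\mathbb R^n\to\mathbb R\cup\{+\infty\}$. The index set $\{1,\dots,m\}$ is partitioned into disjoint sets $\mathcal G^{int}$ and $\mathcal G^{ext}$, fixed throughout. Define $\Omega^{int}=\{\mathbf x: g_\ell(\mathbf x)\le 0\ \forall\ell\in\mathcal G^{int}\}$, $\Omega^{ext}=\{\mathbf x: g_\ell(\mathbf x)\le0\ \forall \ell\in\mathcal G^{ext},\ h_j(\mathbf x)=0\ \forall j\}$, $\Omega=\Omega^{int}\cap\Omega^{ext}$. Let $\phi^{prox}(\mathbf x)=\max_{\ell\in\mathcal G^{int}}g_\ell(\mathbf x)$; let $c^{int}(\mathbf x)=-\prod_{\ell\in\mathcal G^{int}}\min\{1,-g_\ell(\mathbf x)\}$ if $g_\ell(\mathbf x)\le0$ for all $\ell\in\mathcal G^{int}$, and $c^{int}(\mathbf x)=\phi^{prox}(\mathbf x)$ otherwise; let $c^{ext}(\mathbf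 x)=\sum_{\ell\in\mathcal G^{ext}}(\max\{0,g_\ell(\mathbf x)\})^2+\sum_{j=1}^p h_j(\mathbf x)^2$. (If $\mathcal G^{int}=\emptyset$, then $c^{int}\equiv-1$ and $[\phi^{prox}]^2$ is read as $+\infty$.) For $\rho>0$ the merit function is $z(\mathbf x;\rho)=f(\mathbf x)-\rho\log(-c^{int}(\mathbf x))+\frac1\rho c^{ext}(\mathbf x)$ if $c^{int}(\mathbf x)<0$, and $z(\mathbf x;\rho)=+\infty$ otherwise. Algorithm MADS-PIP: inputs $\mathbf x_0$ with $g_\ell(\mathbf x_0)<0$ for all $\ell\in\mathcal G^{int}$ and $z(\mathbf x_0;\rho_0)<+\infty$, $\rho_0>0$, $\theta_\rho\in(0,1)$, $\Delta_0>0$, $\theta_\Delta\in(0,1)\cap\mathbb Q$, $\beta>1$. For $k=0,1,2,\dots$ (the algorithm never stops): mesh $\mathcal M_k=\{\mathbf x_k+\delta_k\mathbf u:\mathbf u\in\mathbb Z^n\}$ with $\delta_k=\min\{\Delta_k,\Delta_k^2/\Delta_0\}$; frame $\mathcal F_k=\{\mathbf x\in\mathcal M_k:\|\mathbf x-\mathbf x_k\|\le\Delta_k\}$. Search: a finite (possibly empty) set $\mathcal S_k\subset\mathcal M_k$ is examined; if some $\mathbf s\in\mathcal S_k$ satisfies $z(\mathbf s;\rho_k)<z(\mathbf x_k;\rho_k)$, set $\mathbf x_{k+1}=\mathbf s$, $\Delta_{k+1}=\Delta_k/\theta_\Delta$, $\rho_{k+1}=\rho_k$ (successful iteration). Otherwise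 poll: choose a finite set $\mathcal D_k$ of nonzero directions with $\mathbf x_k+\mathbf d\in\mathcal F_k$ for all $\mathbf d\in\mathcal D_k$; if some $\mathbf d\in\mathcal D_k$ satisfies $z(\mathbf x_k+\mathbf d;\rho_k)<z(\mathbf x_k;\rho_k)$, set $\mathbf x_{k+1}=\mathbf x_k+\mathbf d$, $\Delta_{k+1}=\Delta_k/\theta_\Delta$, $\rho_{k+1}=\rho_k$ (successful). Otherwise the iteration is unsuccessful: $\mathbf x_{k+1}=\mathbf x_k$, $\Delta_{k+1}=\theta_\Delta\Delta_k$, and $\rho_{k+1}=\theta_\rho\rho_k$ if $\Delta_{k+1}\le\min\{\rho_k^\beta,[\phi^{prox}(\mathbf x_k)]^2\}$, else $\rho_{k+1}=\rho_k$. The path-following index set is $\mathcal K_\rho=\{k:\rho_{k+1}<\rho_k\}$ and $\{\mathbf x_k\}_{k\in\mathcal K_\rho}$ is the path-following subsequence. A point $\bar{\mathbf x}$ is an end-path point if there is an infinite $\mathcal K_\rho^{x}\subseteq\mathcal K_\rho$ with $\lim_{k\in\mathcal K_\rho^x}\mathbf x_k=\bar{\mathbf x}$; $\{\mathbf x_k\}_{k\in\mathcal K^x_\rho}$ is then an end-path subsequence. Assumption 1: for every $\alpha\in\mathbb R$ the level set $\{\mathbf x\in\mathbb R^n: f(\mathbf x)\le\alpha\}$ is bounded. Path-refining direction: $\bar{\mathbf d}\in\mathbb R^n$ is a path-refining direction for the end-path point $\bar{\mathbf x}$ if there exist an infinite index set $\mathcal K^x_\rho\subseteq\mathcal K_\rho$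 with $\lim_{k\in\mathcal K^x_\rho}\mathbf x_k=\bar{\mathbf x}$ and poll directions $\mathbf d_k\in\mathcal D_k$ ($k\in\mathcal K^x_\rho$) such that $\lim_{k\in\mathcal K^x_\rho}\mathbf d_k/\|\mathbf d_k\|=\bar{\mathbf d}$ and $c^{int}(\mathbf x_k+\mathbf d_k)\le c^{int}(\mathbf x_k)$ for all $k\in\mathcal K^x_\rho$. Clarke generalized directional derivative of $c$ at $\mathbf x$ in direction $\mathbf d$: $c^\circ(\mathbf x;\mathbf d)=\limsup_{\mathbf y\to\mathbf x,\ t\searrow0}\frac{c(\mathbf y+t\mathbf d)-c(\mathbf y)}{t}$. *)

theory Defs
  imports "HOL-Analysis.Analysis"
begin

definition phi_prox :: "(nat \<Rightarrow> 'a \<Rightarrow> ereal) \<Rightarrow> nat set \<Rightarrow> 'a \<Rightarrow> ereal" where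
  "phi_prox g Gint x = Max ((\<lambda>l. g l x) ` Gint)"

definition phi_prox_sq :: "(nat \<Rightarrow> 'a \<Rightarrow> ereal) \<Rightarrow> nat set \<Rightarrow> 'a \<Rightarrow> ereal" where
  "phi_prox_sq g Gint x = (if Gint = {} then \<infinity> else (phi_prox g Gint x)^2)"

definition c_int :: "(nat \<Rightarrow> 'a \<Rightarrow> ereal) \<Rightarrow> nat set \<Rightarrow> 'a \<Rightarrow> ereal" where
  "c_int g Gint x =
     (if (\<forall>l\<in>Gint. g l x \<le> 0) then - (\<Prod>l\<in>Gint. min 1 (- g l x))
      else phi_prox g Gint x)"

definition c_ext :: "(nat \<Rightarrow> 'a \<Rightarrow> ereal) \<Rightarrow> nat set \<Rightarrow> (nat \<Rightarrow> 'a \<Rightarrow> ereal) \<Rightarrow> nat \<Rightarrow> 'a \<Rightarrow> ereal" where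
  "c_ext g Gext h p x =
     (\<Sum>l\<in>Gext. (max 0 (g l x))^2) + (\<Sum>j\<in>{1..p}. (h j x)^2)"

definition merit :: "('a \<Rightarrow> ereal) \<Rightarrow> (nat \<Rightarrow> 'a \<Rightarrow> ereal) \<Rightarrow> nat set \<Rightarrow> nat set
    \<Rightarrow> (nat \<Rightarrow> 'a \<Rightarrow> ereal) \<Rightarrow> nat \<Rightarrow> 'a \<Rightarrow> real \<Rightarrow> ereal" where
  "merit f g Gint Gext h p x \<rho> =
     (if c_int g Gint x < 0 then
        f x - ereal (\<rho> * ln (real_of_ereal (- c_int g Gint x)))
            + c_ext g Gext h p x * ereal (1 / \<rho>)
      else \<infinity>)"

definition int_vectors :: "(real^'n) set" where
  "int_vectors = {u. \<forall>i. u $ i \<in> \<int>}"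

definition mesh :: "real^'n \<Rightarrow> real \<Rightarrow> real \<Rightarrow> (real^'n) set" where
  "mesh xk \<Delta>0 \<Delta>k = {xk + min \<Delta>k (\<Delta>k^2 / \<Delta>0) *\<^sub>R u | u. u \<in> int_vectors}"

definition frame :: "real^'n \<Rightarrow> real \<Rightarrow> real \<Rightarrow> (real^'n) set" where
  "frame xk \<Delta>0 \<Delta>k = {y \<in> mesh xk \<Delta>0 \<Delta>k. norm (y - xk) \<le> \<Delta>k}"

text \<open>A run of MADS-PIP: iterates x, mesh/frame sizes Delta, barrier parameters rho,
  search sets S and poll sets D (D k is only consulted when the search fails).\<close>
definition mads_pip_run ::
  "(real^'n \<Rightarrow> ereal) \<Rightarrow> (nat \<Rightarrow> real^'n \<Rightarrow> ereal) \<Rightarrow> nat set \<Rightarrow> nat set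
   \<Rightarrow> (nat \<Rightarrow> real^'n \<Rightarrow> ereal) \<Rightarrow> nat
   \<Rightarrow> real^'n \<Rightarrow> real \<Rightarrow> real \<Rightarrow> real \<Rightarrow> real \<Rightarrow> real
   \<Rightarrow> (nat \<Rightarrow> real^'n) \<Rightarrow> (nat \<Rightarrow> real) \<Rightarrow> (nat \<Rightarrow> real)
   \<Rightarrow> (nat \<Rightarrow> (real^'n) set) \<Rightarrow> (nat \<Rightarrow> (real^'n) set) \<Rightarrow> bool" where
  "mads_pip_run f g Gint Gext h p x0 \<rho>0 \<theta>\<rho> \<Delta>0 \<theta>\<Delta> \<beta> x \<Delta> \<rho> S D \<longleftrightarrow>
     (\<forall>l\<in>Gint. g l x0 < 0) \<and> merit f g Gint Gext h p x0 \<rho>0 < \<infinity> \<and>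
     \<rho>0 > 0 \<and> 0 < \<theta>\<rho> \<and> \<theta>\<rho> < 1 \<and> \<Delta>0 > 0 \<and> 0 < \<theta>\<Delta> \<and> \<theta>\<Delta> < 1 \<and> \<theta>\<Delta> \<in> \<rat> \<and> \<beta> > 1 \<and>
     x 0 = x0 \<and> \<Delta> 0 = \<Delta>0 \<and> \<rho> 0 = \<rho>0 \<and>
     (\<forall>k. let z = (\<lambda>y. merit f g Gint Gext h p y (\<rho> k)) in
        finite (S k) \<and> S k \<subseteq> mesh (x k) \<Delta>0 (\<Delta> k) \<and>
        finite (D k) \<and> 0 \<notin> D k \<and> (\<forall>d\<in>D k. x k + d \<in> frame (x k) \<Delta>0 (\<Delta> k)) \<and>
        (if (\<exists>s\<in>S k. z s < z (x k)) then
           x (Suc k) \<in> {s \<in> S k. z s < z (x k)} \<and>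
           \<Delta> (Suc k) = \<Delta> k / \<theta>\<Delta> \<and> \<rho> (Suc k) = \<rho> k
         else if (\<exists>d\<in>D k. z (x k + d) < z (x k)) then
           x (Suc k) \<in> {x k + d | d. d \<in> D k \<and> z (x k + d) < z (x k)} \<and>
           \<Delta> (Suc k) = \<Delta> k / \<theta>\<Delta> \<and> \<rho> (Suc k) = \<rho> k
         else
           x (Suc k) = x k \<and> \<Delta> (Suc k) = \<theta>\<Delta> * \<Delta> k \<and>
           \<rho> (Suc k) = (if ereal (\<Delta> (Suc k)) \<le> min (ereal (\<rho> k powr \<beta>)) (phi_prox_sq g Gint (x k))
                        then \<theta>\<rho> * \<rho> k else \<rho> k)))"

definition path_following_set :: "(nat \<Rightarrow> real) \<Rightarrow> nat set" where
  "path_following_set \<rho> = {k. \<rho> (Suc k) < \<rho> k}"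

definition end_path_point :: "(nat \<Rightarrow> real) \<Rightarrow> (nat \<Rightarrow> real^'n) \<Rightarrow> real^'n \<Rightarrow> bool" where
  "end_path_point \<rho> x xbar \<longleftrightarrow>
     (\<exists>K. infinite K \<and> K \<subseteq> path_following_set \<rho> \<and>
          (x \<longlongrightarrow> xbar) (inf sequentially (principal K)))"

definition path_refining_direction ::
  "(nat \<Rightarrow> real^'n \<Rightarrow> ereal) \<Rightarrow> nat set \<Rightarrow> (nat \<Rightarrow> real) \<Rightarrow> (nat \<Rightarrow> real^'n)
   \<Rightarrow> (nat \<Rightarrow> (real^'n) set) \<Rightarrow> real^'n \<Rightarrow> real^'n \<Rightarrow> bool" where
  "path_refining_direction g Gint \<rho> x D xbar dbar \<longleftrightarrow>
     (\<exists>K d. infinite K \<and> K \<subseteq> path_following_set \<rho> \<and>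
          (x \<longlongrightarrow> xbar) (inf sequentially (principal K)) \<and>
          (\<forall>k\<in>K. d k \<in> D k \<and> c_int g Gint (x k + d k) \<le> c_int g Gint (x k)) \<and>
          ((\<lambda>k. (1 / norm (d k)) *\<^sub>R d k) \<longlongrightarrow> dbar) (inf sequentially (principal K)))"

definition lipschitz_near :: "('a::metric_space \<Rightarrow> ereal) \<Rightarrow> 'a \<Rightarrow> bool" where
  "lipschitz_near c x \<longleftrightarrow>
     (\<exists>e>0. \<exists>L. (\<forall>y\<in>ball x e. \<bar>c y\<bar> \<noteq> \<infinity>) \<and> L-lipschitz_on (ball x e) (\<lambda>y. real_of_ereal (c y)))"

definition clarke_dd :: "('a::real_normed_vector \<Rightarrow> real) \<Rightarrow> 'a \<Rightarrow> 'a \<Rightarrow> ereal" where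
  "clarke_dd c x d =
     Limsup (at (x, 0) within UNIV \<times> {0<..}) (\<lambda>(y, t). ereal ((c (y + t *\<^sub>R d) - c y) / t))"

end

(*
  On a path-following iteration k the poll is unsuccessful, so no poll point
  x_k + d_k decreases the merit function z(.; rho_k).  If moreover
  c_int(x_k + d_k) <= c_int(x_k), the log-barrier term cannot decrease either,
  and comparing the merit values leaves
    c_ext(x_k) - c_ext(x_k + d_k) <= rho_k (f(x_k + d_k) - f(x_k)) <= rho_k L_f |d_k|.
  Along the path-following indices rho_k -> 0 (rho is multiplied by theta_rho
  infinitely often) and |d_k| <= Delta_k <= rho_k^beta / theta_Delta -> 0.  Hence the
  difference quotients of c_ext at x_k with step |d_k| in the direction
  d_k / |d_k| -> dbar are bounded below by a null sequence; Lipschitz continuity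
  of c_ext allows replacing d_k / |d_k| by dbar, so the Clarke derivative, a
  limsup over such quotients, is nonnegative.
*)

theory Submission
  imports Defs
begin

lemma inf_sequentially_principal_ne_bot:
  assumes "infinite K"
  shows "inf sequentially (principal K) \<noteq> bot"
proof
  assume "inf sequentially (principal K) = bot"
  then obtain N where "\<And>n. n \<ge> N \<Longrightarrow> n \<notin> K"
    using eventually_False[of "inf sequentially (principal K)"]
    unfolding eventually_inf_principal eventually_sequentially by auto
  then show False
    using assms infinite_nat_iff_unbounded_le by blast
qed

lemma Limsup_filter_mono:
  assumes "F \<le> F'"
  shows "Limsup F f \<le> Limsup F' f"
  using assms unfolding Limsup_def by (intro INF_superset_mono) (auto simp: le_filter_def)

lemma Limsup_compose_filterlim_le:
  assumes "filterlim s F' F"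
  shows "Limsup F (\<lambda>k. f (s k)) \<le> Limsup F' f"
  using Limsup_filtermap_ge[where f=s and F=F and g=f] Limsup_filter_mono[OF assms[unfolded filterlim_def]]
  by (rule order_trans)

lemma Limsup_quotients_le_clarke_dd:
  fixes c :: "'a::real_normed_vector \<Rightarrow> real"
  assumes "(y \<longlongrightarrow> x) F" "(t \<longlongrightarrow> 0) F" "eventually (\<lambda>k. t k > 0) F"
  shows "Limsup F (\<lambda>k. ereal ((c (y k + t k *\<^sub>R d) - c (y k)) / t k)) \<le> clarke_dd c x d"
proof -
  have "filterlim (\<lambda>k. (y k, t k)) (at (x, 0) within UNIV \<times> {0<..}) F"
    unfolding filterlim_at
    using assms by (auto intro: tendsto_Pair elim: eventually_mono)
  from Limsup_compose_filterlim_le[OF this, where f="\<lambda>(y, t). ereal ((c (y + t *\<^sub>R d) - c y) / t)"]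
  show ?thesis
    unfolding clarke_dd_def by simp
qed

lemma clarke_dd_nonneg_if_small_decrease:
  fixes c :: "'a::real_normed_vector \<Rightarrow> real"
  assumes lip: "L-lipschitz_on (ball x r) c" and "r > 0" and "F \<noteq> bot"
    and y: "(y \<longlongrightarrow> x) F"
    and s: "((\<lambda>k. norm (s k)) \<longlongrightarrow> 0) F" "eventually (\<lambda>k. s k \<noteq> 0) F"
    and dir: "((\<lambda>k. (1 / norm (s k)) *\<^sub>R s k) \<longlongrightarrow> d) F" and a: "(a \<longlongrightarrow> 0) F"
    and decrease: "eventually (\<lambda>k. c (y k) - c (y k + s k) \<le> norm (s k) * a k) F"
  shows "clarke_dd c x d \<ge> 0"
proof -
  define t where "t k = norm (s k)" for k
  define v where "v k = (1 / t k) *\<^sub>R s k" for k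
  \<comment> \<open>Lipschitz continuity turns the step s k = t k v k into t k d at the cost t k L |d - v k|.\<close>
  define b where "b k = L * norm (d - v k) + a k" for k
  have "((\<lambda>k. y k + s k) \<longlongrightarrow> x + 0) F"
    using y tendsto_norm_zero_cancel[OF s(1)] by (rule tendsto_add)
  moreover have "((\<lambda>k. y k + t k *\<^sub>R d) \<longlongrightarrow> x + 0 *\<^sub>R d) F"
    using y s(1) unfolding t_def by (intro tendsto_add tendsto_scaleR tendsto_const)
  ultimately have near: "eventually (\<lambda>k. y k + s k \<in> ball x r \<and> y k + t k *\<^sub>R d \<in> ball x r) F"
    using \<open>r > 0\<close> by (auto intro!: eventually_conj dest!: tendstoD simp: dist_commute)
  have "eventually (\<lambda>k. ereal (- b k) \<le> ereal ((c (y k + t k *\<^sub>R d) - c (y k)) / t k)) F"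
    using near s(2) decrease
  proof eventually_elim
    case (elim k)
    then have "t k > 0" and s_eq: "s k = t k *\<^sub>R v k"
      unfolding t_def v_def by simp_all
    have "c (y k + s k) - c (y k + t k *\<^sub>R d) \<le> L * dist (y k + s k) (y k + t k *\<^sub>R d)"
      using lipschitz_onD[OF lip, of "y k + s k" "y k + t k *\<^sub>R d"] elim(1)
      by (simp add: dist_real_def)
    also have "dist (y k + s k) (y k + t k *\<^sub>R d) = t k * norm (d - v k)"
      using \<open>t k > 0\<close> by (simp add: s_eq dist_norm norm_minus_commute flip: scaleR_diff_right)
    finally have "- (t k * b k) \<le> c (y k + t k *\<^sub>R d) - c (y k)"
      using elim(3) unfolding b_def t_def by (simp add: algebra_simps)
    then show ?case
      using \<open>t k > 0\<close> by (simp add: le_divide_eq mult.commute)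
  qed
  then have "Limsup F (\<lambda>k. ereal (- b k)) \<le> Limsup F (\<lambda>k. ereal ((c (y k + t k *\<^sub>R d) - c (y k)) / t k))"
    by (rule Limsup_mono)
  moreover have "Limsup F (\<lambda>k. ereal (- b k)) = 0"
  proof (rule lim_imp_Limsup)
    have "((\<lambda>k. - b k) \<longlongrightarrow> - (L * norm (d - d) + 0)) F"
      unfolding b_def v_def t_def
      by (intro tendsto_minus tendsto_add tendsto_mult tendsto_const tendsto_norm tendsto_diff dir a)
    then show "((\<lambda>k. ereal (- b k)) \<longlongrightarrow> 0) F"
      unfolding zero_ereal_def by (intro lim_ereal[THEN iffD2]) simp
  qed (use \<open>F \<noteq> bot\<close> in simp)
  moreover have "eventually (\<lambda>k. t k > 0) F"
    using s(2) unfolding t_def by (simp add: eventually_mono)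
  ultimately show ?thesis
    using Limsup_quotients_le_clarke_dd[OF y s(1)[folded t_def], of c d] by simp
qed

lemma c_ext_decrease_le_if_merit_not_decreased:
  assumes not_less: "\<not> merit f g Gint Gext h p y r < merit f g Gint Gext h p x r" and "r > 0"
    and cx: "c_int g Gint x = ereal cx" and cy: "c_int g Gint y = ereal cy" "cy \<le> cx" "cx < 0"
    and "f x = ereal fx" "f y = ereal fy"
    and "c_ext g Gext h p x = ereal ex" "c_ext g Gext h p y = ereal ey"
  shows "ex - ey \<le> r * (fy - fx)"
proof -
  have "fx - r * ln (- cx) + ex * (1 / r) \<le> fy - r * ln (- cy) + ey * (1 / r)"
    using not_less assms(2-) unfolding merit_def by simp
  moreover have "r * ln (- cx) \<le> r * ln (- cy)"
    using cy \<open>r > 0\<close> by simp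
  ultimately have "(ex - ey) / r \<le> fy - fx"
    by (simp add: diff_divide_distrib)
  then show ?thesis
    using \<open>r > 0\<close> by (simp add: pos_divide_le_eq mult.commute)
qed

lemma c_int_neg_if_merit_less:
  "merit f g Gint Gext h p y r < merit f g Gint Gext h p x r \<Longrightarrow> c_int g Gint y < 0"
  unfolding merit_def by (auto split: if_splits)

locale mads_pip =
  fixes f :: "real^'n \<Rightarrow> ereal" and g :: "nat \<Rightarrow> real^'n \<Rightarrow> ereal" and Gint Gext :: "nat set"
    and h :: "nat \<Rightarrow> real^'n \<Rightarrow> ereal" and p :: nat
    and x0 :: "real^'n" and \<rho>0 \<theta>\<rho> \<Delta>0 \<theta>\<Delta> \<beta> :: real
    and x :: "nat \<Rightarrow> real^'n" and \<Delta> \<rho> :: "nat \<Rightarrow> real"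
    and S D :: "nat \<Rightarrow> (real^'n) set"
  assumes run: "mads_pip_run f g Gint Gext h p x0 \<rho>0 \<theta>\<rho> \<Delta>0 \<theta>\<Delta> \<beta> x \<Delta> \<rho> S D"
begin

abbreviation z :: "nat \<Rightarrow> real^'n \<Rightarrow> ereal" where
  "z k y \<equiv> merit f g Gint Gext h p y (\<rho> k)"

lemma parameters: "\<rho>0 > 0" "0 < \<theta>\<rho>" "\<theta>\<rho> < 1" "0 < \<theta>\<Delta>" "\<beta> > 1" "\<rho> 0 = \<rho>0"
  using run unfolding mads_pip_run_def by auto

lemma iteration:
  "finite (S k) \<and> S k \<subseteq> mesh (x k) \<Delta>0 (\<Delta> k) \<and>
   finite (D k) \<and> 0 \<notin> D k \<and> (\<forall>d\<in>D k. x k + d \<in> frame (x k) \<Delta>0 (\<Delta> k)) \<and>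
   (if (\<exists>s\<in>S k. z k s < z k (x k)) then
      x (Suc k) \<in> {s \<in> S k. z k s < z k (x k)} \<and> \<Delta> (Suc k) = \<Delta> k / \<theta>\<Delta> \<and> \<rho> (Suc k) = \<rho> k
    else if (\<exists>d\<in>D k. z k (x k + d) < z k (x k)) then
      x (Suc k) \<in> {x k + d | d. d \<in> D k \<and> z k (x k + d) < z k (x k)} \<and>
      \<Delta> (Suc k) = \<Delta> k / \<theta>\<Delta> \<and> \<rho> (Suc k) = \<rho> k
    else
      x (Suc k) = x k \<and> \<Delta> (Suc k) = \<theta>\<Delta> * \<Delta> k \<and>
      \<rho> (Suc k) = (if ereal (\<Delta> (Suc k)) \<le> min (ereal (\<rho> k powr \<beta>)) (phi_prox_sq g Gint (x k))
                   then \<theta>\<rho> * \<rho> k else \<rho> k))"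
  using run unfolding mads_pip_run_def Let_def by blast

lemma zero_notin_poll: "0 \<notin> D k"
  using iteration by blast

lemma norm_poll_le: "d \<in> D k \<Longrightarrow> norm d \<le> \<Delta> k"
  using iteration[of k] unfolding frame_def by auto

lemma rho_Suc_cases: "\<rho> (Suc k) = \<rho> k \<or> \<rho> (Suc k) = \<theta>\<rho> * \<rho> k"
  using iteration[of k] by (auto split: if_splits)

lemma merit_iterate_Suc_cases: "x (Suc k) = x k \<or> z k (x (Suc k)) < z k (x k)"
  using iteration[of k] by (auto split: if_splits)

lemma rho_Suc_eq_if_successful:
  assumes "(\<exists>s\<in>S k. z k s < z k (x k)) \<or> (\<exists>d\<in>D k. z k (x k + d) < z k (x k))"
  shows "\<rho> (Suc k) = \<rho> k"
  using iteration[of k] assms by (auto split: if_splits)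

lemma unsuccessful_iteration:
  assumes "\<not> (\<exists>s\<in>S k. z k s < z k (x k))" "\<not> (\<exists>d\<in>D k. z k (x k + d) < z k (x k))"
  shows "\<Delta> (Suc k) = \<theta>\<Delta> * \<Delta> k"
    and "\<rho> (Suc k) = (if ereal (\<Delta> (Suc k)) \<le> min (ereal (\<rho> k powr \<beta>)) (phi_prox_sq g Gint (x k))
                      then \<theta>\<rho> * \<rho> k else \<rho> k)"
  using iteration[of k] assms by simp_all

lemma path_following_step:
  assumes "k \<in> path_following_set \<rho>"
  shows "\<rho> (Suc k) = \<theta>\<rho> * \<rho> k" "\<theta>\<Delta> * \<Delta> k \<le> \<rho> k powr \<beta>"
    and "d \<in> D k \<Longrightarrow> \<not> z k (x k + d) < z k (x k)"
proof -
  have decrease: "\<rho> (Suc k) < \<rho> k"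
    using assms unfolding path_following_set_def by simp
  then have unsuccessful: "\<not> (\<exists>s\<in>S k. z k s < z k (x k))" "\<not> (\<exists>d\<in>D k. z k (x k + d) < z k (x k))"
    using rho_Suc_eq_if_successful[of k] by auto
  then show "d \<in> D k \<Longrightarrow> \<not> z k (x k + d) < z k (x k)"
    by blast
  show "\<rho> (Suc k) = \<theta>\<rho> * \<rho> k" "\<theta>\<Delta> * \<Delta> k \<le> \<rho> k powr \<beta>"
    using unsuccessful_iteration[OF unsuccessful] decrease by (auto split: if_splits)
qed

lemma rho_pos: "\<rho> k > 0"
proof (induction k)
  case (Suc k)
  then show ?case
    using rho_Suc_cases[of k] parameters by auto
qed (simp add: parameters)

lemma decseq_rho: "decseq \<rho>"
proof (rule decseq_SucI)
  fix k
  show "\<rho> (Suc k) \<le> \<rho> k"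
    using rho_Suc_cases[of k] rho_pos[of k] parameters by (auto simp: mult_le_cancel_right1)
qed

lemma c_int_iterate_neg: "c_int g Gint (x k) < 0"
proof (induction k)
  case 0
  have "z 0 (x 0) < \<infinity>"
    using run unfolding mads_pip_run_def by auto
  then show ?case
    unfolding merit_def by (auto split: if_splits)
next
  case (Suc k)
  then show ?case
    using merit_iterate_Suc_cases[of k] c_int_neg_if_merit_less by metis
qed

lemma rho_tendsto_zero:
  assumes "infinite (path_following_set \<rho>)"
  shows "\<rho> \<longlonglongrightarrow> 0"
proof -
  define F where "F = inf sequentially (principal (path_following_set \<rho>))"
  have "\<forall>k. 0 \<le> \<rho> k"
    using rho_pos less_imp_le by blast
  then obtain l where l: "\<rho> \<longlonglongrightarrow> l"
    using decseq_convergent[OF decseq_rho] by blast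
  have "((\<lambda>k. \<rho> (Suc k)) \<longlongrightarrow> l) F"
    using tendsto_mono[OF inf_le1 LIMSEQ_Suc[OF l]] unfolding F_def .
  moreover have "((\<lambda>k. \<rho> (Suc k)) \<longlongrightarrow> \<theta>\<rho> * l) F"
  proof (rule Lim_transform_eventually)
    show "((\<lambda>k. \<theta>\<rho> * \<rho> k) \<longlongrightarrow> \<theta>\<rho> * l) F"
      using tendsto_mult_left[OF tendsto_mono[OF inf_le1 l]] unfolding F_def .
    have "\<theta>\<rho> * \<rho> k = \<rho> (Suc k)" if "k \<in> path_following_set \<rho>" for k
      using path_following_step(1)[OF that] by simp
    then show "eventually (\<lambda>k. \<theta>\<rho> * \<rho> k = \<rho> (Suc k)) F"
      unfolding F_def eventually_inf_principal by (intro always_eventually allI impI)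
  qed
  ultimately have "l = \<theta>\<rho> * l"
    using tendsto_unique[OF inf_sequentially_principal_ne_bot[OF assms(1)]] unfolding F_def by blast
  then have "l = 0"
    using parameters(3) by simp
  then show ?thesis
    using l by simp
qed

lemma norm_poll_le_rho_powr:
  assumes "k \<in> path_following_set \<rho>" "d \<in> D k"
  shows "norm d \<le> \<rho> k powr \<beta> / \<theta>\<Delta>"
proof -
  have "\<theta>\<Delta> * norm d \<le> \<theta>\<Delta> * \<Delta> k"
    using norm_poll_le[OF assms(2)] parameters(4) by simp
  then have "norm d * \<theta>\<Delta> \<le> \<rho> k powr \<beta>"
    using path_following_step(2)[OF assms(1)] by (simp add: mult.commute)
  then show ?thesis
    using parameters(4) by (simp add: pos_le_divide_eq)
qed

lemma norm_poll_tendsto_zero: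
  assumes "infinite K" "K \<subseteq> path_following_set \<rho>" "\<forall>k\<in>K. d k \<in> D k"
  shows "((\<lambda>k. norm (d k)) \<longlongrightarrow> 0) (inf sequentially (principal K))"
proof (rule tendsto_sandwich[OF _ _ tendsto_const])
  show "eventually (\<lambda>k. norm (d k) \<le> \<rho> k powr \<beta> / \<theta>\<Delta>) (inf sequentially (principal K))"
    unfolding eventually_inf_principal using assms(2,3) norm_poll_le_rho_powr
    by (intro always_eventually) blast
  have "(\<lambda>k. \<rho> k powr \<beta>) \<longlonglongrightarrow> 0"
    using rho_tendsto_zero[OF infinite_super[OF assms(2,1)]] rho_pos parameters(5)
    by (intro tendsto_zero_powrI[OF _ tendsto_const]) (auto simp: less_imp_le)
  then show "((\<lambda>k. \<rho> k powr \<beta> / \<theta>\<Delta>) \<longlongrightarrow> 0) (inf sequentially (principal K))"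
    by (intro tendsto_mono[OF inf_le1] tendsto_divide_zero)
qed (simp add: always_eventually)

lemma c_ext_decrease_le_on_path_following:
  assumes "k \<in> path_following_set \<rho>" "d \<in> D k"
    and "c_int g Gint (x k + d) \<le> c_int g Gint (x k)"
    and "L-lipschitz_on U (\<lambda>y. real_of_ereal (f y))" "x k \<in> U" "x k + d \<in> U"
    and finite: "\<forall>y\<in>U. \<bar>f y\<bar> \<noteq> \<infinity> \<and> \<bar>c_int g Gint y\<bar> \<noteq> \<infinity> \<and> \<bar>c_ext g Gext h p y\<bar> \<noteq> \<infinity>"
  shows "real_of_ereal (c_ext g Gext h p (x k)) - real_of_ereal (c_ext g Gext h p (x k + d))
    \<le> norm d * (\<rho> k * L)"
proof -
  let ?r = "\<lambda>c y. real_of_ereal (c y)"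
  have fin: "f y = ereal (?r f y)" "c_int g Gint y = ereal (?r (c_int g Gint) y)"
    "c_ext g Gext h p y = ereal (?r (c_ext g Gext h p) y)" if "y \<in> U" for y
    using finite that by (simp_all add: ereal_real)
  have c_int_le: "?r (c_int g Gint) (x k + d) \<le> ?r (c_int g Gint) (x k)"
    using assms(3) fin(2)[OF assms(5)] fin(2)[OF assms(6)] by (metis ereal_less_eq(3))
  have "ereal (?r (c_int g Gint) (x k)) < 0"
    using c_int_iterate_neg[of k] fin(2)[OF assms(5)] by simp
  then have c_int_neg: "?r (c_int g Gint) (x k) < 0"
    by simp
  have "?r (c_ext g Gext h p) (x k) - ?r (c_ext g Gext h p) (x k + d) \<le> \<rho> k * (?r f (x k + d) - ?r f (x k))"
    using c_ext_decrease_le_if_merit_not_decreased[OF path_following_step(3)[OF assms(1,2)] rho_pos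
        fin(2)[OF assms(5)] fin(2)[OF assms(6)] c_int_le c_int_neg
        fin(1)[OF assms(5)] fin(1)[OF assms(6)] fin(3)[OF assms(5)] fin(3)[OF assms(6)]] .
  also have "\<dots> \<le> \<rho> k * (L * norm d)"
    using lipschitz_onD[OF assms(4-6)] rho_pos[of k]
    by (intro mult_left_mono) (simp_all add: dist_norm dist_real_def)
  finally show ?thesis
    by (simp add: ac_simps)
qed

lemma c_ext_decrease_along_path_following:
  assumes K: "infinite K" "K \<subseteq> path_following_set \<rho>"
    and x_lim: "(x \<longlongrightarrow> xbar) (inf sequentially (principal K))"
    and poll: "\<forall>k\<in>K. d k \<in> D k \<and> c_int g Gint (x k + d k) \<le> c_int g Gint (x k)"
    and "lipschitz_near f xbar" "lipschitz_near (c_int g Gint) xbar"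
      "lipschitz_near (c_ext g Gext h p) xbar"
  obtains L where "eventually (\<lambda>k. real_of_ereal (c_ext g Gext h p (x k))
      - real_of_ereal (c_ext g Gext h p (x k + d k)) \<le> norm (d k) * (\<rho> k * L))
    (inf sequentially (principal K))"
proof -
  define F where "F = inf sequentially (principal K)"
  obtain rf L where "rf > 0" and f_fin: "\<forall>y\<in>ball xbar rf. \<bar>f y\<bar> \<noteq> \<infinity>"
    and f_lip: "L-lipschitz_on (ball xbar rf) (\<lambda>y. real_of_ereal (f y))"
    using assms(5) unfolding lipschitz_near_def by blast
  obtain ri where "ri > 0" and c_int_fin: "\<forall>y\<in>ball xbar ri. \<bar>c_int g Gint y\<bar> \<noteq> \<infinity>"
    using assms(6) unfolding lipschitz_near_def by blast
  obtain re where "re > 0" and c_ext_fin: "\<forall>y\<in>ball xbar re. \<bar>c_ext g Gext h p y\<bar> \<noteq> \<infinity>"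
    using assms(7) unfolding lipschitz_near_def by blast
  define r where "r = min rf (min ri re)"
  define U where "U = ball xbar r"
  have "r > 0"
    using \<open>rf > 0\<close> \<open>ri > 0\<close> \<open>re > 0\<close> unfolding r_def by simp
  have "((\<lambda>k. x k + d k) \<longlongrightarrow> xbar + 0) F"
    using x_lim tendsto_norm_zero_cancel[OF norm_poll_tendsto_zero[OF K]] poll
    unfolding F_def by (intro tendsto_add) auto
  then have "eventually (\<lambda>k. dist (x k + d k) xbar < r) F"
    using \<open>r > 0\<close> by (simp add: tendstoD)
  moreover have "eventually (\<lambda>k. dist (x k) xbar < r) F"
    using tendstoD[OF x_lim \<open>r > 0\<close>] unfolding F_def .
  moreover have "eventually (\<lambda>k. k \<in> K) F"
    unfolding F_def eventually_inf_principal by simp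
  ultimately have "eventually (\<lambda>k. k \<in> K \<and> x k \<in> U \<and> x k + d k \<in> U) F"
    by eventually_elim (simp add: U_def dist_commute)
  moreover have "L-lipschitz_on U (\<lambda>y. real_of_ereal (f y))"
    using f_lip unfolding U_def r_def by (rule lipschitz_on_subset) auto
  ultimately have "eventually (\<lambda>k. real_of_ereal (c_ext g Gext h p (x k))
      - real_of_ereal (c_ext g Gext h p (x k + d k)) \<le> norm (d k) * (\<rho> k * L)) F"
    using c_ext_decrease_le_on_path_following[of _ "d _" L U] K(2) poll f_fin c_int_fin c_ext_fin
    unfolding U_def r_def by (auto elim!: eventually_mono)
  then show ?thesis
    using that unfolding F_def by blast
qed

end

theorem mainTheorem5:
  fixes f :: "real^'n \<Rightarrow> ereal" and g h :: "nat \<Rightarrow> real^'n \<Rightarrow> ereal"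
    and m p :: nat and Gint Gext :: "nat set"
    and x0 :: "real^'n" and \<rho>0 \<theta>\<rho> \<Delta>0 \<theta>\<Delta> \<beta> :: real
    and x :: "nat \<Rightarrow> real^'n" and \<Delta> \<rho> :: "nat \<Rightarrow> real"
    and S D :: "nat \<Rightarrow> (real^'n) set" and xbar dbar :: "real^'n"
  assumes f_range: "\<And>y. f y \<noteq> - \<infinity>"
    and g_range: "\<And>l y. l \<in> {1..m} \<Longrightarrow> g l y \<noteq> - \<infinity>"
    and h_range: "\<And>j y. j \<in> {1..p} \<Longrightarrow> h j y \<noteq> - \<infinity>"
    and partition: "Gint \<union> Gext = {1..m}" "Gint \<inter> Gext = {}"
    and assumption1: "\<And>\<alpha>::real. bounded {y. f y \<le> ereal \<alpha>}"
    and run: "mads_pip_run f g Gint Gext h p x0 \<rho>0 \<theta>\<rho> \<Delta>0 \<theta>\<Delta> \<beta> x \<Delta> \<rho> S D"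
    and endpath: "end_path_point \<rho> x xbar"
    and refining: "path_refining_direction g Gint \<rho> x D xbar dbar"
    and lip_f: "lipschitz_near f xbar"
    and lip_cint: "lipschitz_near (c_int g Gint) xbar"
    and lip_cext: "lipschitz_near (c_ext g Gext h p) xbar"
  shows "clarke_dd (\<lambda>y. real_of_ereal (c_ext g Gext h p y)) xbar dbar \<ge> 0"
proof -
  interpret mads_pip f g Gint Gext h p x0 \<rho>0 \<theta>\<rho> \<Delta>0 \<theta>\<Delta> \<beta> x \<Delta> \<rho> S D
    using run by unfold_locales
  obtain K d where K: "infinite K" "K \<subseteq> path_following_set \<rho>"
    and x_lim: "(x \<longlongrightarrow> xbar) (inf sequentially (principal K))"
    and poll: "\<forall>k\<in>K. d k \<in> D k \<and> c_int g Gint (x k + d k) \<le> c_int g Gint (x k)"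
    and dir_lim: "((\<lambda>k. (1 / norm (d k)) *\<^sub>R d k) \<longlongrightarrow> dbar) (inf sequentially (principal K))"
    using refining unfolding path_refining_direction_def by blast
  have step_lim: "((\<lambda>k. norm (d k)) \<longlongrightarrow> 0) (inf sequentially (principal K))"
    using norm_poll_tendsto_zero[OF K] poll by blast
  have step_nonzero: "eventually (\<lambda>k. d k \<noteq> 0) (inf sequentially (principal K))"
    unfolding eventually_inf_principal using poll zero_notin_poll by (intro always_eventually) metis
  have rho_lim: "(\<rho> \<longlongrightarrow> 0) (inf sequentially (principal K))"
    by (rule tendsto_mono[OF inf_le1 rho_tendsto_zero[OF infinite_super[OF K(2,1)]]])
  obtain L where decrease: "eventually (\<lambda>k. real_of_ereal (c_ext g Gext h p (x k))
      - real_of_ereal (c_ext g Gext h p (x k + d k)) \<le> norm (d k) * (\<rho> k * L))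
    (inf sequentially (principal K))"
    using c_ext_decrease_along_path_following[OF K x_lim poll lip_f lip_cint lip_cext] .
  obtain r Le where "r > 0"
    and c_ext_lip: "Le-lipschitz_on (ball xbar r) (\<lambda>y. real_of_ereal (c_ext g Gext h p y))"
    using lip_cext unfolding lipschitz_near_def by blast
  show ?thesis
    by (rule clarke_dd_nonneg_if_small_decrease[OF c_ext_lip \<open>r > 0\<close>
          inf_sequentially_principal_ne_bot[OF K(1)] x_lim step_lim step_nonzero dir_lim
          tendsto_mult_left_zero[OF rho_lim] decrease])
qed

end
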